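(* Let $P=\Bbbk[x_1,x_2,x_3]$ with Poisson bracket $\{x_1,x_2\}=x_1x_2$, $\{x_2,x_3\}=3x_1^2+2x_1x_2+x_2x_3$, $\{x_3,x_1\}=x_1^2+x_1x_3$. If $G$ is a nontrivial finite subgroup of $\mathrm{PAut}_{\mathrm{gr}}(P)$ generated by Poisson reflections, then $P^G$ is not isomorphic to $P$ as Poisson algebras.
   Context: $\Bbbk$ is algebraically closed of characteristic $0$; $P$ has the standard grading. $\mathrm{PAut}_{\mathrm{gr}}(P)$ is the group of degree-preserving bijective algebra homomorphisms preserving the bracket. A Poisson reflection is a finite-order $\phi\in\mathrm{PAut}_{\mathrm{gr}}(P)$ such that $\phi|_{P_1}$ has eigenvalues $1,1,\xi$ with $\xi\neq1$ a primitive root of unity. $P^G$ is the subalgebra of $G$-invariants with the restricted bracket. *)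

theory Defs
  imports "HOL-Library.Poly_Mapping" "HOL-Library.Product_Plus" "Jordan_Normal_Form.Char_Poly"
begin

text \<open>Polynomials in three variables x1,x2,x3 over 'k: finitely supported maps from
exponent triples (a,b,c) (standing for x1^a x2^b x3^c) to coefficients.\<close>

type_synonym expo = "nat \<times> nat \<times> nat"
type_synonym 'k mpoly3 = "expo \<Rightarrow>\<^sub>0 'k"

definition ecomp :: "nat \<Rightarrow> expo \<Rightarrow> nat" where
  "ecomp i m = (if i = 0 then fst m else if i = 1 then fst (snd m) else snd (snd m))"

definition eunit :: "nat \<Rightarrow> expo" where
  "eunit i = (if i = 0 then (1,0,0) else if i = 1 then (0,1,0) else (0,0,1))"

definition tdeg :: "expo \<Rightarrow> nat" where
  "tdeg m = fst m + fst (snd m) + snd (snd m)"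

definition const3 :: "'k::comm_ring_1 \<Rightarrow> 'k mpoly3" where
  "const3 c = Poly_Mapping.single (0,0,0) c"

text \<open>Variable x_(i+1), i = 0,1,2.\<close>
definition var3 :: "nat \<Rightarrow> 'k::comm_ring_1 mpoly3" where
  "var3 i = Poly_Mapping.single (eunit i) 1"

definition pd :: "nat \<Rightarrow> 'k::comm_ring_1 mpoly3 \<Rightarrow> 'k mpoly3" where
  "pd i p = (\<Sum>m\<in>Poly_Mapping.keys p. Poly_Mapping.single (m - eunit i) (of_nat (ecomp i m) * Poly_Mapping.lookup p m))"

definition gbr :: "nat \<Rightarrow> nat \<Rightarrow> 'k::comm_ring_1 mpoly3" where
  "gbr i j =
    (let x1 = var3 0; x2 = var3 1; x3 = var3 2;
         b12 = x1 * x2;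
         b23 = 3 * x1 * x1 + 2 * x1 * x2 + x2 * x3;
         b31 = x1 * x1 + x1 * x3
     in if i = 0 \<and> j = 1 then b12 else if i = 1 \<and> j = 0 then - b12
        else if i = 1 \<and> j = 2 then b23 else if i = 2 \<and> j = 1 then - b23
        else if i = 2 \<and> j = 0 then b31 else if i = 0 \<and> j = 2 then - b31
        else 0)"

definition pbr :: "'k::comm_ring_1 mpoly3 \<Rightarrow> 'k mpoly3 \<Rightarrow> 'k mpoly3" where
  "pbr f g = (\<Sum>i<3. \<Sum>j<3. pd i f * pd j g * gbr i j)"

definition homog :: "nat \<Rightarrow> 'k::zero mpoly3 \<Rightarrow> bool" where
  "homog d p \<longleftrightarrow> (\<forall>m\<in>Poly_Mapping.keys p. tdeg m = d)"

text \<open>'k-algebra homomorphism P -> P (unital, hence 'k-linear since it fixes constants).\<close>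
definition alg_hom3 :: "('k::comm_ring_1 mpoly3 \<Rightarrow> 'k mpoly3) \<Rightarrow> bool" where
  "alg_hom3 f \<longleftrightarrow> (\<forall>c. f (const3 c) = const3 c) \<and> (\<forall>p q. f (p + q) = f p + f q)
      \<and> (\<forall>p q. f (p * q) = f p * f q)"

definition poisson_hom :: "('k::comm_ring_1 mpoly3 \<Rightarrow> 'k mpoly3) \<Rightarrow> bool" where
  "poisson_hom f \<longleftrightarrow> alg_hom3 f \<and> (\<forall>p q. f (pbr p q) = pbr (f p) (f q))"

definition PAut_gr :: "('k::comm_ring_1 mpoly3 \<Rightarrow> 'k mpoly3) set" where
  "PAut_gr = {f. bij f \<and> poisson_hom f \<and> (\<forall>d p. homog d p \<longrightarrow> homog d (f p))}"

definition lin_mat :: "('k::comm_ring_1 mpoly3 \<Rightarrow> 'k mpoly3) \<Rightarrow> 'k mat" where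
  "lin_mat f = mat 3 3 (\<lambda>(i,j). Poly_Mapping.lookup (f (var3 j)) (eunit i))"

definition poisson_reflection :: "('k::comm_ring_1 mpoly3 \<Rightarrow> 'k mpoly3) \<Rightarrow> bool" where
  "poisson_reflection f \<longleftrightarrow> f \<in> PAut_gr \<and> (\<exists>n>0. (f ^^ n) = id) \<and>
     (\<exists>\<xi> n. \<xi> \<noteq> 1 \<and> n > 0 \<and> \<xi> ^ n = 1 \<and> (\<forall>k. 0 < k \<and> k < n \<longrightarrow> \<xi> ^ k \<noteq> 1) \<and>
        char_poly (lin_mat f) = [:-1, 1:] ^ 2 * [:-\<xi>, 1:])"

inductive_set gen_group :: "('a \<Rightarrow> 'a) set \<Rightarrow> ('a \<Rightarrow> 'a) set" for R where
  gen_id: "id \<in> gen_group R"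
| gen_gen: "r \<in> R \<Longrightarrow> r \<in> gen_group R"
| gen_comp: "f \<in> gen_group R \<Longrightarrow> g \<in> gen_group R \<Longrightarrow> f \<circ> g \<in> gen_group R"
| gen_inv: "f \<in> gen_group R \<Longrightarrow> inv_into UNIV f \<in> gen_group R"

definition invariants :: "('k::comm_ring_1 mpoly3 \<Rightarrow> 'k mpoly3) set \<Rightarrow> 'k mpoly3 set" where
  "invariants G = {p. \<forall>g\<in>G. g p = p}"

definition poisson_iso_onto :: "('k::comm_ring_1 mpoly3 \<Rightarrow> 'k mpoly3) \<Rightarrow> 'k mpoly3 set \<Rightarrow> bool" where
  "poisson_iso_onto f A \<longleftrightarrow> bij_betw f UNIV A \<and> poisson_hom f"

end

theory Submission
  imports Defs
begin

text \<open>
  The bracket is the Jacobian bracket {f, g} = det (grad f, grad g, grad Omega) with potential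
  Omega = x1^3 + x1^2 x2 + x1 x2 x3.  Comparing coefficients in the bracket relations between the
  images of x1, x2, x3 shows that the only Poisson reflection is r: x1 -> -x1, x2 -> x2,
  x3 -> x3 + 2 x1, so P^G consists of r-invariants and contains x1^2, x2 and x1 + x3.

  Let psi : P -> P^G be a Poisson isomorphism with Jacobian determinant J.  By the chain rule,
  det (grad a, grad b, grad psi(Omega)) = J psi {a', b'} = J det (grad a, grad b, grad Omega) for
  a = psi a', b = psi b'; taking a, b among x1^2, x2, x1 + x3 gives d1 psi(Omega) = J d1 Omega and
  d3 psi(Omega) = J d3 Omega.  Symmetry of the mixed partial d1 d3 psi(Omega) forces the x1- and
  x3-coefficients of J to vanish, and J(0) = 0 because the psi(x_i) are r-invariant while r has
  Jacobian -1.  So J psi(...) has no x1-term, yet by the chain rule again it equals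
  det (grad x1^2, grad x2, grad (x1 + x3)) = 2 x1.
\<close>

section \<open>Polynomial calculus in three variables\<close>

lemma poly_mapping_induct [case_names zero single add]:
  assumes "P 0"
    and "\<And>m c. P (Poly_Mapping.single m c)"
    and "\<And>f g. P f \<Longrightarrow> P g \<Longrightarrow> P (f + g)"
  shows "P f"
proof (induction f rule: update_induct)
  case const
  show ?case using assms(1) .
next
  case (update f m c)
  have "Poly_Mapping.update m c f = f + Poly_Mapping.single m c"
    using update.hyps(1)
    by (intro poly_mapping_eqI) (auto simp: lookup_update lookup_add lookup_single in_keys_iff when_def)
  then show ?case using update.IH assms(2,3) by metis
qed

lemma zero_expo: "((0::nat), (0::nat), (0::nat)) = 0"
  by (simp add: zero_prod_def)

lemma var3_eq_var3_2: "2 \<le> i \<Longrightarrow> var3 i = var3 2"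
  by (simp add: var3_def eunit_def)

lemma var3_single:
  "var3 0 = Poly_Mapping.single (1,0,0) 1"
  "var3 (Suc 0) = Poly_Mapping.single (0,1,0) 1"
  "var3 2 = Poly_Mapping.single (0,0,1) 1"
  by (simp_all add: var3_def eunit_def)

lemma var3_pow:
  "var3 0 ^ n = Poly_Mapping.single (n,0,0) 1"
  "var3 (Suc 0) ^ n = Poly_Mapping.single (0,n,0) 1"
  "var3 2 ^ n = Poly_Mapping.single (0,0,n) 1"
  by (induction n) (simp_all add: zero_expo var3_def eunit_def mult_single)

lemma var3_neq_0: "var3 i \<noteq> 0"
  by (metis lookup_zero lookup_single_eq var3_def zero_neq_one)

lemma const3_add: "const3 (a + b) = const3 a + const3 b"
  by (simp add: const3_def single_add)

lemma const3_mult: "const3 (a * b) = const3 a * const3 b"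
  by (simp add: const3_def mult_single)

lemma const3_uminus: "const3 (- a) = - const3 a"
  by (simp add: const3_def single_uminus)

lemma const3_0 [simp]: "const3 0 = 0"
  by (simp add: const3_def)

lemma const3_1 [simp]: "const3 1 = 1"
  by (simp add: const3_def zero_expo)

lemma const3_numeral: "const3 (numeral n) = numeral n"
  by (simp add: const3_def zero_expo)

lemma const3_of_nat: "const3 (of_nat n) = of_nat n"
  by (simp add: const3_def zero_expo)

lemma const3_mult_single: "const3 c * Poly_Mapping.single m d = Poly_Mapping.single m (c * d)"
  by (simp add: const3_def mult_single zero_expo)

lemma numeral_mult_single:
  "(numeral n :: 'k::comm_ring_1 mpoly3) * Poly_Mapping.single m d = Poly_Mapping.single m (numeral n * d)"
  by (metis add_0 mult_single single_numeral)

lemma lookup_single_mult_shift: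
  "Poly_Mapping.lookup (Poly_Mapping.single e c * (p :: 'k::comm_ring_1 mpoly3)) (e + m) = c * Poly_Mapping.lookup p m"
  by (induction p rule: poly_mapping_induct)
    (simp_all add: mult_single lookup_single when_def distrib_left lookup_add)

lemma lookup_const3_mult: "Poly_Mapping.lookup (const3 c * p) m = c * Poly_Mapping.lookup p m"
  using lookup_single_mult_shift[of 0 c p m] by (simp add: const3_def zero_expo)

lemma single_mult_eq_0_imp:
  fixes p :: "'k::idom mpoly3"
  assumes "c \<noteq> 0" and "Poly_Mapping.single e c * p = 0"
  shows "p = 0"
proof (rule poly_mapping_eqI)
  fix m
  show "Poly_Mapping.lookup p m = Poly_Mapping.lookup 0 m"
    using lookup_single_mult_shift[of e c p m] assms by simp
qed

lemma single_eq_const3_mult_monomial: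
  "Poly_Mapping.single m c = const3 c * (var3 0 ^ fst m * var3 1 ^ fst (snd m) * var3 2 ^ snd (snd m))"
  by (cases m) (simp add: var3_pow const3_def mult_single zero_expo)

lemma pd_add: "pd i (p + q) = pd i p + pd i q"
  unfolding pd_def by (rule setsum_keys_plus_distrib) (simp_all add: distrib_left single_add)

lemma pd_single:
  "pd i (Poly_Mapping.single m c) = Poly_Mapping.single (m - eunit i) (of_nat (ecomp i m) * c)"
  by (cases "c = 0") (simp_all add: pd_def)

lemma pd_zero [simp]: "pd i 0 = 0"
  by (simp add: pd_def)

lemma pd_uminus: "pd i (- p) = - pd i p"
  by (metis add_eq_0_iff pd_add pd_zero)

lemma pd_single_mult:
  "pd i (Poly_Mapping.single m a * Poly_Mapping.single n b) =
     pd i (Poly_Mapping.single m a) * Poly_Mapping.single n b + Poly_Mapping.single m a * pd i (Poly_Mapping.single n b)"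
proof -
  obtain m1 m2 m3 n1 n2 n3 where mn: "m = (m1, m2, m3)" "n = (n1, n2, n3)"
    by (cases m, cases n) auto
  consider "i = 0" | "i = 1" | "i \<noteq> 0 \<and> i \<noteq> 1" by blast
  then show ?thesis
  proof cases
    case 1
    then show ?thesis unfolding mn
      by (cases m1; cases n1) (simp_all add: pd_single mult_single eunit_def ecomp_def algebra_simps flip: single_add)
  next
    case 2
    then show ?thesis unfolding mn
      by (cases m2; cases n2) (simp_all add: pd_single mult_single eunit_def ecomp_def algebra_simps flip: single_add)
  next
    case 3
    then show ?thesis unfolding mn
      by (cases m3; cases n3) (simp_all add: pd_single mult_single eunit_def ecomp_def algebra_simps flip: single_add)
  qed
qed

lemma pd_mult: "pd i (p * q) = pd i p * q + p * pd i q"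
proof (induction p rule: poly_mapping_induct)
  case (single m a)
  show ?case
    by (induction q rule: poly_mapping_induct)
      (simp_all add: pd_single_mult distrib_left pd_add algebra_simps)
qed (simp_all add: distrib_right pd_add algebra_simps)

lemma pd_const [simp]: "pd i (const3 c) = 0"
  by (simp add: const3_def pd_single ecomp_def)

lemma pd_one [simp]: "pd i 1 = 0"
  using pd_const[of i 1] by simp

lemma pd_numeral [simp]: "pd i (numeral n) = 0"
  using pd_const[of i "numeral n"] by (simp add: const3_numeral)

lemma pd_var: "pd i (var3 j) = (if i = j \<or> (2 \<le> i \<and> 2 \<le> j) then 1 else 0)"
  by (auto simp add: var3_def pd_single ecomp_def eunit_def)

lemma pd_power: "pd i (p ^ n) = of_nat n * p ^ (n - 1) * pd i p"
  by (induction n) (simp_all add: pd_mult algebra_simps power_eq_if)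

lemma pd_commute: "pd i (pd j p) = pd j (pd i p)"
proof (induction p rule: poly_mapping_induct)
  case (single m c)
  obtain m1 m2 m3 where "m = (m1, m2, m3)" by (cases m) auto
  then show ?case by (simp add: pd_single eunit_def ecomp_def algebra_simps)
qed (simp_all add: pd_add)

definition const_term :: "'k::comm_ring_1 mpoly3 \<Rightarrow> 'k" where
  "const_term p = Poly_Mapping.lookup p 0"

lemma const_term_add: "const_term (p + q) = const_term p + const_term q"
  by (simp add: const_term_def lookup_add)

lemma const_term_uminus: "const_term (- p) = - const_term p"
  by (simp add: const_term_def)

lemma const_term_zero [simp]: "const_term 0 = 0"
  by (simp add: const_term_def)

lemma const_term_single: "const_term (Poly_Mapping.single m c) = (if m = 0 then c else 0)"
  by (simp add: const_term_def lookup_single when_def)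

lemma const_term_mult: "const_term (p * q) = const_term p * const_term q"
proof (induction p rule: poly_mapping_induct)
  case (single m a)
  have "m + n = 0 \<longleftrightarrow> m = 0 \<and> n = 0" for n :: expo
    by (cases m; cases n) (auto simp: zero_prod_def)
  then show ?case
    by (induction q rule: poly_mapping_induct)
      (simp_all add: mult_single const_term_single distrib_left const_term_add)
qed (simp_all add: distrib_right const_term_add)

lemma const_term_const [simp]: "const_term (const3 c) = c"
  by (simp add: const3_def const_term_single zero_expo)

lemma const_term_one [simp]: "const_term 1 = 1"
  using const_term_const[of 1] by simp

lemma const_term_power: "const_term (p ^ n) = const_term p ^ n"
  by (induction n) (simp_all add: const_term_mult)

lemma const_term_numeral [simp]: "const_term (numeral n) = numeral n"
  using const_term_const[of "numeral n"] by (simp add: const3_numeral)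

lemma const_term_var [simp]: "const_term (var3 i) = 0"
  by (simp add: var3_def const_term_single eunit_def zero_prod_def)

definition eval_monom :: "(nat \<Rightarrow> 'k::comm_ring_1 mpoly3) \<Rightarrow> expo \<Rightarrow> 'k mpoly3" where
  "eval_monom g m = g 0 ^ fst m * g 1 ^ fst (snd m) * g 2 ^ snd (snd m)"

definition subst :: "(nat \<Rightarrow> 'k::comm_ring_1 mpoly3) \<Rightarrow> 'k mpoly3 \<Rightarrow> 'k mpoly3" where
  "subst g p = (\<Sum>m\<in>Poly_Mapping.keys p. const3 (Poly_Mapping.lookup p m) * eval_monom g m)"

lemma subst_add: "subst g (p + q) = subst g p + subst g q"
  unfolding subst_def
  by (rule setsum_keys_plus_distrib) (simp_all add: const3_add distrib_right)

lemma subst_single: "subst g (Poly_Mapping.single m c) = const3 c * eval_monom g m"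
  by (cases "c = 0") (simp_all add: subst_def)

lemma subst_zero [simp]: "subst g 0 = 0"
  by (simp add: subst_def)

lemma subst_mult: "subst g (p * q) = subst g p * subst g q"
proof (induction p rule: poly_mapping_induct)
  case (single m a)
  have "eval_monom g (m + n) = eval_monom g m * eval_monom g n" for n
    by (cases m; cases n) (simp add: eval_monom_def power_add algebra_simps)
  then show ?case
    by (induction q rule: poly_mapping_induct)
      (simp_all add: mult_single subst_single const3_mult distrib_left subst_add algebra_simps)
qed (simp_all add: distrib_right subst_add)

lemma subst_uminus: "subst g (- p) = - subst g p"
  by (metis add_eq_0_iff subst_add subst_zero)

lemma subst_diff: "subst g (p - q) = subst g p - subst g q"
  by (metis diff_conv_add_uminus subst_add subst_uminus)

lemma subst_var [simp]:
  "subst g (var3 0) = g 0" "subst g (var3 (Suc 0)) = g 1" "subst g (var3 2) = g 2"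
  by (simp_all add: var3_def subst_single eval_monom_def eunit_def const3_def zero_expo)

lemma alg_hom3_zero: "alg_hom3 f \<Longrightarrow> f 0 = 0"
  unfolding alg_hom3_def by (metis add_cancel_right_right add_0)

lemma alg_hom3_power: "alg_hom3 f \<Longrightarrow> f (p ^ n) = f p ^ n"
  unfolding alg_hom3_def by (induction n) (auto, metis const3_1)

lemma alg_hom3_eq_subst:
  assumes "alg_hom3 f"
  shows "f = subst (\<lambda>i. f (var3 i))"
proof
  fix p
  show "f p = subst (\<lambda>i. f (var3 i)) p"
  proof (induction p rule: poly_mapping_induct)
    case zero
    show ?case using alg_hom3_zero[OF assms] by simp
  next
    case (single m c)
    have "f (Poly_Mapping.single m c) =
        f (const3 c * (var3 0 ^ fst m * var3 1 ^ fst (snd m) * var3 2 ^ snd (snd m)))"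
      by (simp only: single_eq_const3_mult_monomial)
    also have "\<dots> = subst (\<lambda>i. f (var3 i)) (Poly_Mapping.single m c)"
      using assms unfolding alg_hom3_def
      by (simp add: alg_hom3_power[OF assms] subst_single eval_monom_def)
    finally show ?case .
  next
    case (add p q)
    then show ?case using assms by (simp add: alg_hom3_def subst_add)
  qed
qed

lemma const_term_subst:
  assumes "\<And>i. const_term (h i) = 0"
  shows "const_term (subst h p) = const_term p"
proof (induction p rule: poly_mapping_induct)
  case (single m c)
  obtain a b d where "m = (a, b, d)" by (cases m) auto
  then show ?case
    by (simp add: subst_single eval_monom_def const_term_mult const_term_power assms const_term_single
      zero_prod_def power_0_left)
qed (simp_all add: subst_add const_term_add)

section \<open>Jacobian determinants\<close>

lemma sum_lessThan_3: "(\<Sum>j<3. f j) = f 0 + f 1 + f (2::nat)"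
  by (simp add: eval_nat_numeral)

lemma pd_subst: "pd i (subst g p) = (\<Sum>j<3. subst g (pd j p) * pd i (g j))"
proof (induction p rule: poly_mapping_induct)
  case (single m c)
  obtain a b d where m: "m = (a, b, d)" by (cases m) auto
  have lhs: "pd i (subst g (Poly_Mapping.single m c)) =
     const3 c * (of_nat a * g 0 ^ (a - 1) * pd i (g 0) * g 1 ^ b * g 2 ^ d
      + g 0 ^ a * (of_nat b * g 1 ^ (b - 1) * pd i (g 1)) * g 2 ^ d
      + g 0 ^ a * g 1 ^ b * (of_nat d * g 2 ^ (d - 1) * pd i (g 2)))"
    unfolding m by (simp add: subst_single eval_monom_def pd_mult pd_power algebra_simps)
  note simps = pd_single subst_single eval_monom_def eunit_def ecomp_def const3_mult const3_add
    const3_of_nat algebra_simps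
  have "subst g (pd 0 (Poly_Mapping.single m c)) = const3 c * of_nat a * g 0 ^ (a - 1) * g 1 ^ b * g 2 ^ d"
    unfolding m by (cases a) (simp_all add: simps)
  moreover have "subst g (pd 1 (Poly_Mapping.single m c)) = const3 c * of_nat b * g 0 ^ a * g 1 ^ (b - 1) * g 2 ^ d"
    unfolding m by (cases b) (simp_all add: simps)
  moreover have "subst g (pd 2 (Poly_Mapping.single m c)) = const3 c * of_nat d * g 0 ^ a * g 1 ^ b * g 2 ^ (d - 1)"
    unfolding m by (cases d) (simp_all add: simps)
  ultimately show ?case
    unfolding lhs sum_lessThan_3 by (simp add: algebra_simps)
qed (simp_all add: subst_add pd_add sum.distrib distrib_right)

definition jac3 :: "'k::comm_ring_1 mpoly3 \<Rightarrow> 'k mpoly3 \<Rightarrow> 'k mpoly3 \<Rightarrow> 'k mpoly3" where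
  "jac3 a b c = (pd 1 a * pd 2 b - pd 2 a * pd 1 b) * pd 0 c + (pd 2 a * pd 0 b - pd 0 a * pd 2 b) * pd 1 c
     + (pd 0 a * pd 1 b - pd 1 a * pd 0 b) * pd 2 c"

definition jac_det :: "(nat \<Rightarrow> 'k::comm_ring_1 mpoly3) \<Rightarrow> 'k mpoly3" where
  "jac_det g = jac3 (g 0) (g 1) (g 2)"

text \<open>det (M A) = det M * det A for M with rows p, q, t and A with rows a0, a1, a2, in the
  cross-product form of jac3.\<close>
lemma det3_mult:
  fixes p0 p1 p2 q0 q1 q2 t0 t1 t2 :: "'a::comm_ring_1"
  shows
  "((p0 * a0 1 + p1 * a1 1 + p2 * a2 1) * (q0 * a0 2 + q1 * a1 2 + q2 * a2 2)
    - (p0 * a0 2 + p1 * a1 2 + p2 * a2 2) * (q0 * a0 1 + q1 * a1 1 + q2 * a2 1)) * (t0 * a0 0 + t1 * a1 0 + t2 * a2 0)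
   + ((p0 * a0 2 + p1 * a1 2 + p2 * a2 2) * (q0 * a0 0 + q1 * a1 0 + q2 * a2 0)
    - (p0 * a0 0 + p1 * a1 0 + p2 * a2 0) * (q0 * a0 2 + q1 * a1 2 + q2 * a2 2)) * (t0 * a0 1 + t1 * a1 1 + t2 * a2 1)
   + ((p0 * a0 0 + p1 * a1 0 + p2 * a2 0) * (q0 * a0 1 + q1 * a1 1 + q2 * a2 1)
    - (p0 * a0 1 + p1 * a1 1 + p2 * a2 1) * (q0 * a0 0 + q1 * a1 0 + q2 * a2 0)) * (t0 * a0 2 + t1 * a1 2 + t2 * a2 2)
   = ((a0 1 * a1 2 - a0 2 * a1 1) * a2 0 + (a0 2 * a1 0 - a0 0 * a1 2) * a2 1 + (a0 0 * a1 1 - a0 1 * a1 0) * a2 2)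
     * ((p1 * q2 - p2 * q1) * t0 + (p2 * q0 - p0 * q2) * t1 + (p0 * q1 - p1 * q0) * t2)"
  by (simp add: algebra_simps)

lemma jac3_subst: "jac3 (subst g p) (subst g q) (subst g t) = jac_det g * subst g (jac3 p q t)"
  unfolding jac_det_def jac3_def pd_subst sum_lessThan_3 subst_add subst_diff subst_mult
  by (rule det3_mult)

lemma alg_hom3_jac3:
  assumes "alg_hom3 f"
  shows "jac3 (f p) (f q) (f t) = jac_det (\<lambda>i. f (var3 i)) * f (jac3 p q t)"
  by (subst (1 2 3 4) alg_hom3_eq_subst[OF assms]) (rule jac3_subst)

definition Omega :: "'k::comm_ring_1 mpoly3" where
  "Omega = var3 0 ^ 3 + var3 0 ^ 2 * var3 1 + var3 0 * var3 1 * var3 2"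

lemma pd_Omega:
  "pd 0 Omega = 3 * var3 0 * var3 0 + 2 * var3 0 * var3 1 + var3 1 * var3 2"
  "pd (Suc 0) Omega = var3 0 * var3 0 + var3 0 * var3 2"
  "pd 2 Omega = var3 0 * var3 1"
  by (simp_all add: Omega_def pd_add pd_mult pd_power pd_var algebra_simps power2_eq_square)

lemma pbr_eq_jac3: "pbr f g = jac3 f g Omega"
  by (simp add: pbr_def jac3_def sum_lessThan_3 gbr_def Let_def pd_Omega algebra_simps)

section \<open>Poisson reflections\<close>

definition linform :: "'k::comm_ring_1 \<Rightarrow> 'k \<Rightarrow> 'k \<Rightarrow> 'k mpoly3" where
  "linform a b c = Poly_Mapping.single (1,0,0) a + Poly_Mapping.single (0,1,0) b + Poly_Mapping.single (0,0,1) c"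

lemma linform_eq_vars: "linform a b c = const3 a * var3 0 + const3 b * var3 1 + const3 c * var3 2"
  by (simp add: linform_def var3_single const3_mult_single)

lemma lookup_linform:
  "Poly_Mapping.lookup (linform a b c) (Suc 0,0,0) = a"
  "Poly_Mapping.lookup (linform a b c) (0,Suc 0,0) = b"
  "Poly_Mapping.lookup (linform a b c) (0,0,Suc 0) = c"
  by (simp_all add: linform_def lookup_add lookup_single)

lemma pd_linform:
  "pd 0 (linform a b c) = const3 a" "pd (Suc 0) (linform a b c) = const3 b" "pd 2 (linform a b c) = const3 c"
  by (simp_all add: linform_def pd_add pd_single eunit_def ecomp_def const3_def zero_expo)

lemma homog_1_eq_linform:
  assumes "homog 1 p"
  shows "\<exists>a b c. p = linform a b c"
proof -
  have "p = linform (Poly_Mapping.lookup p (1,0,0)) (Poly_Mapping.lookup p (0,1,0)) (Poly_Mapping.lookup p (0,0,1))"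
  proof (rule poly_mapping_eqI)
    fix m
    show "Poly_Mapping.lookup p m = Poly_Mapping.lookup (linform (Poly_Mapping.lookup p (1,0,0))
        (Poly_Mapping.lookup p (0,1,0)) (Poly_Mapping.lookup p (0,0,1))) m"
    proof (cases "m \<in> Poly_Mapping.keys p")
      case True
      then have "tdeg m = 1" using assms by (simp add: homog_def)
      then have "m = (1,0,0) \<or> m = (0,1,0) \<or> m = (0,0,1)"
        by (cases m) (auto simp: tdeg_def)
      then show ?thesis by (auto simp: linform_def lookup_add lookup_single)
    next
      case False
      then show ?thesis by (auto simp: linform_def lookup_add lookup_single when_def in_keys_iff)
    qed
  qed
  then show ?thesis by blast
qed

lemma homog_1_var3: "homog 1 (var3 i)"
  by (simp add: homog_def var3_def eunit_def tdeg_def)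

lemma coeffs_jac3_linform:
  fixes a1 a2 a3 b1 b2 b3 :: "'k::comm_ring_1"
  defines "J \<equiv> jac3 (linform a1 a2 a3) (linform b1 b2 b3) Omega"
    and "c1 \<equiv> a2 * b3 - a3 * b2" and "c2 \<equiv> a3 * b1 - a1 * b3" and "c3 \<equiv> a1 * b2 - a2 * b1"
  shows "Poly_Mapping.lookup J (2,0,0) = 3 * c1 + c2"
    "Poly_Mapping.lookup J (Suc 0,Suc 0,0) = 2 * c1 + c3"
    "Poly_Mapping.lookup J (Suc 0,0,Suc 0) = c2"
    "Poly_Mapping.lookup J (0,2,0) = 0"
    "Poly_Mapping.lookup J (0,0,2) = 0"
  unfolding J_def c1_def c2_def c3_def jac3_def pd_linform One_nat_def
  by (simp_all add: linform_def var3_single const3_mult_single mult_single distrib_left distrib_right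
    lookup_add lookup_single pd_Omega numeral_mult_single lookup_minus when_def algebra_simps)

lemma coeffs_mult_linform:
  fixes a1 a2 a3 b1 b2 b3 :: "'k::comm_ring_1"
  defines "M \<equiv> linform a1 a2 a3 * linform b1 b2 b3"
  shows "Poly_Mapping.lookup M (2,0,0) = a1 * b1"
    "Poly_Mapping.lookup M (Suc 0,Suc 0,0) = a1 * b2 + a2 * b1"
    "Poly_Mapping.lookup M (Suc 0,0,Suc 0) = a1 * b3 + a3 * b1"
    "Poly_Mapping.lookup M (0,2,0) = a2 * b2"
    "Poly_Mapping.lookup M (0,0,2) = a3 * b3"
  unfolding M_def
  by (simp_all add: linform_def mult_single distrib_left distrib_right lookup_add lookup_single when_def)

lemma poisson_hom_pbr_images:
  assumes "poisson_hom f"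
  defines "P \<equiv> f (var3 0)" and "Q \<equiv> f (var3 1)" and "U \<equiv> f (var3 2)"
  shows "pbr P Q = P * Q"
    and "pbr Q U = 3 * (P * P) + 2 * (P * Q) + Q * U"
    and "pbr U P = P * P + P * U"
proof -
  have hom: "f (p + q) = f p + f q" "f (p * q) = f p * f q" "f (numeral n) = numeral n"
      "f (pbr p q) = pbr (f p) (f q)" for p q n
    using assms(1) const3_numeral unfolding poisson_hom_def alg_hom3_def by metis+
  have "pbr (var3 0) (var3 1) = var3 0 * var3 1"
    and "pbr (var3 1) (var3 2) = 3 * (var3 0 * var3 0) + 2 * (var3 0 * var3 1) + var3 1 * var3 2"
    and "pbr (var3 2) (var3 0) = var3 0 * var3 0 + var3 0 * var3 2"
    by (simp_all add: pbr_eq_jac3 jac3_def pd_var pd_Omega algebra_simps)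
  then show "pbr P Q = P * Q" "pbr Q U = 3 * (P * P) + 2 * (P * Q) + Q * U" "pbr U P = P * P + P * U"
    unfolding P_def Q_def U_def by (metis hom)+
qed

lemma linear_poisson_first_row:
  fixes p1 p2 p3 q1 q2 q3 u1 u2 u3 :: "'k::field_char_0"
  defines "P \<equiv> linform p1 p2 p3" and "Q \<equiv> linform q1 q2 q3" and "U \<equiv> linform u1 u2 u3"
  assumes PQ: "pbr P Q = P * Q" and QU: "pbr Q U = 3 * (P * P) + 2 * (P * Q) + Q * U"
  shows "p2 = 0 \<and> p3 = 0"
proof -
  note coeffs = coeffs_jac3_linform coeffs_mult_linform lookup_add lookup_const3_mult
  note unfolds = P_def Q_def U_def pbr_eq_jac3 coeffs const3_numeral[symmetric]
  have cube_zero: "a = 0" if "a * b = 0" and "3 * (a * a) + 2 * (a * b) + b * c = 0" for a b c :: 'k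
  proof -
    have "3 * a ^ 3 = a * (3 * (a * a) + 2 * (a * b) + b * c) - (2 * a + c) * (a * b)"
      by (simp add: algebra_simps power3_eq_cube)
    also have "\<dots> = 0" using that by simp
    finally show ?thesis by simp
  qed
  have "p2 * q2 = 0" "3 * (p2 * p2) + 2 * (p2 * q2) + q2 * u2 = 0"
    using arg_cong[OF PQ, of "\<lambda>p. Poly_Mapping.lookup p (0,2,0)"]
      arg_cong[OF QU, of "\<lambda>p. Poly_Mapping.lookup p (0,2,0)"]
    by (simp_all add: unfolds)
  moreover have "p3 * q3 = 0" "3 * (p3 * p3) + 2 * (p3 * q3) + q3 * u3 = 0"
    using arg_cong[OF PQ, of "\<lambda>p. Poly_Mapping.lookup p (0,0,2)"]
      arg_cong[OF QU, of "\<lambda>p. Poly_Mapping.lookup p (0,0,2)"]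
    by (simp_all add: unfolds)
  ultimately show ?thesis using cube_zero by blast
qed

lemma linear_poisson_triangular:
  fixes p1 q1 q2 q3 u1 u2 u3 :: "'k::field_char_0"
  defines "P \<equiv> linform p1 0 0" and "Q \<equiv> linform q1 q2 q3" and "U \<equiv> linform u1 u2 u3"
  assumes "p1 \<noteq> 0"
    and PQ: "pbr P Q = P * Q"
    and QU: "pbr Q U = 3 * (P * P) + 2 * (P * Q) + Q * U"
    and UP: "pbr U P = P * P + P * U"
  shows "q1 = 0 \<and> q3 = 0 \<and> u2 = 0 \<and> u1 = u3 - p1 \<and> q2 * u3 = p1 * p1"
proof -
  note coeffs = coeffs_jac3_linform coeffs_mult_linform lookup_add lookup_const3_mult
  note unfolds = P_def Q_def U_def pbr_eq_jac3 coeffs const3_numeral[symmetric]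
  have q3: "q3 = 0"
    using arg_cong[OF PQ, of "\<lambda>p. Poly_Mapping.lookup p (1,0,1)"] \<open>p1 \<noteq> 0\<close>
    by (simp add: unfolds)
  have q1: "q1 = 0"
    using arg_cong[OF PQ, of "\<lambda>p. Poly_Mapping.lookup p (2,0,0)"] \<open>p1 \<noteq> 0\<close> q3
    by (simp add: unfolds)
  have "p1 * u3 = p1 * (p1 + u1)"
    using arg_cong[OF UP, of "\<lambda>p. Poly_Mapping.lookup p (2,0,0)"]
    by (simp add: unfolds algebra_simps)
  then have u3: "u3 = p1 + u1"
    using \<open>p1 \<noteq> 0\<close> by simp
  have u2: "u2 = 0"
    using arg_cong[OF UP, of "\<lambda>p. Poly_Mapping.lookup p (1,1,0)"] \<open>p1 \<noteq> 0\<close>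
    by (simp add: unfolds)
  have "3 * (q2 * u3) = 3 * (p1 * p1)"
    using arg_cong[OF QU, of "\<lambda>p. Poly_Mapping.lookup p (2,0,0)"]
    by (simp add: unfolds q1 q3)
  then show ?thesis using q1 q3 u2 u3 by simp
qed

lemma char_poly_lin_mat_triangular:
  assumes "f (var3 0) = linform a 0 0" and "f (var3 1) = linform b c 0" and "f (var3 2) = linform d e g"
  shows "char_poly (lin_mat f) = [:-a, 1:] * [:-c, 1:] * [:-g, 1:]"
proof -
  have f: "f (var3 0) = linform a 0 0" "f (var3 (Suc 0)) = linform b c 0"
    "f (var3 (Suc (Suc 0))) = linform d e g"
    using assms by (simp_all add: numeral_2_eq_2)
  have M: "lin_mat f \<in> carrier_mat 3 3"
    by (simp add: lin_mat_def)
  have "upper_triangular (lin_mat f)"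
  proof (rule upper_triangularI)
    fix i j assume "j < i" "i < dim_row (lin_mat f)"
    then have "i < 3" "(i = 1 \<and> j = 0) \<or> (i = 2 \<and> j = 0) \<or> (i = 2 \<and> j = 1)"
      by (auto simp: lin_mat_def)
    then show "lin_mat f $$ (i, j) = 0"
      by (auto simp: lin_mat_def eunit_def f lookup_linform)
  qed
  moreover have "diag_mat (lin_mat f) = [a, c, g]"
    by (simp add: diag_mat_def lin_mat_def upt_rec eunit_def f lookup_linform)
  ultimately show ?thesis
    by (simp add: char_poly_upper_triangular[OF M] algebra_simps)
qed

lemma reflection_eigenvalues:
  fixes a c g \<xi> :: "'k::field_char_0"
  assumes "[:-a, 1:] * [:-c, 1:] * [:-g, 1:] = [:-1, 1:] ^ 2 * [:-\<xi>, 1:]"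
    and cg: "c * g = a * a" and "\<xi> \<noteq> 1"
  shows "a = -1 \<and> c = 1 \<and> g = 1"
proof -
  from assms(1) have vieta: "a + c + g = 2 + \<xi>" "a * c + a * g + c * g = 1 + 2 * \<xi>" "a * c * g = \<xi>"
    by (simp_all add: power2_eq_square algebra_simps)
  have \<xi>: "\<xi> = a ^ 3"
    using vieta(3) cg by (simp add: power3_eq_cube mult.assoc)
  have "(a - 1) ^ 3 * (a + 1) = a * (2 + a ^ 3) - (1 + 2 * a ^ 3)"
    by (simp add: algebra_simps power3_eq_cube power4_eq_xxxx)
  also have "\<dots> = 0"
  proof -
    have "a * (c + g) + c * g = 1 + 2 * \<xi>"
      using vieta(2) by (simp add: algebra_simps)
    moreover have "c + g = 2 + \<xi> - a"
      using vieta(1) by (simp add: algebra_simps)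
    ultimately show ?thesis
      using cg \<xi> by (simp add: algebra_simps power3_eq_cube)
  qed
  finally have "a = 1 \<or> a = -1"
    by (simp add: eq_neg_iff_add_eq_0)
  then have a: "a = -1"
    using \<xi> \<open>\<xi> \<noteq> 1\<close> by auto
  then have "c + g = 2" "c * g = 1"
    using vieta(1) \<xi> cg by simp_all
  have "(c - 1) ^ 2 = (c + g - 2) * c + (1 - c * g)"
    by (simp add: power2_eq_square algebra_simps)
  then have "(c - 1) ^ 2 = 0"
    using \<open>c + g = 2\<close> \<open>c * g = 1\<close> by simp
  then show ?thesis
    using a \<open>c + g = 2\<close> by simp
qed

definition refl3 :: "nat \<Rightarrow> 'k::comm_ring_1 mpoly3" where
  "refl3 i = (if i = 0 then - var3 0 else if i = 1 then var3 1 else 2 * var3 0 + var3 2)"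

lemma alg_hom3_eq_subst_refl3:
  assumes "alg_hom3 r"
    and "r (var3 0) = - var3 0" "r (var3 1) = var3 1" "r (var3 2) = 2 * var3 0 + var3 2"
  shows "r = subst refl3"
proof -
  have "r (var3 i) = refl3 i" for i
  proof -
    consider "i = 0" | "i = 1" | "2 \<le> i" by linarith
    then show ?thesis
    proof cases
      case 3
      then show ?thesis
        using assms(4) by (simp add: refl3_def var3_eq_var3_2[OF 3])
    qed (use assms in \<open>simp_all add: refl3_def\<close>)
  qed
  then have "(\<lambda>i. r (var3 i)) = refl3" ..
  then show ?thesis
    using alg_hom3_eq_subst[OF assms(1)] by (simp only:)
qed

lemma poisson_reflection_eq_subst_refl3:
  fixes r :: "'k::field_char_0 mpoly3 \<Rightarrow> 'k mpoly3"
  assumes "poisson_reflection r"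
  shows "r = subst refl3"
proof -
  from assms have "bij r" and hom: "poisson_hom r" and alg: "alg_hom3 r"
    and graded: "\<And>d p. homog d p \<Longrightarrow> homog d (r p)"
    unfolding poisson_reflection_def PAut_gr_def poisson_hom_def by blast+
  from assms obtain \<xi> :: 'k where "\<xi> \<noteq> 1" and cp: "char_poly (lin_mat r) = [:-1, 1:] ^ 2 * [:-\<xi>, 1:]"
    unfolding poisson_reflection_def by blast
  have linear: "\<exists>a b c. r (var3 i) = linform a b c" for i
    using homog_1_eq_linform[OF graded[OF homog_1_var3]] .
  obtain p1 p2 p3 where P: "r (var3 0) = linform p1 p2 p3"
    using linear by blast
  obtain q1 q2 q3 where Q: "r (var3 1) = linform q1 q2 q3"
    using linear by blast
  obtain u1 u2 u3 where U: "r (var3 2) = linform u1 u2 u3"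
    using linear by blast
  note brackets = poisson_hom_pbr_images[OF hom, unfolded P Q U]
  have p23: "p2 = 0" "p3 = 0"
    using linear_poisson_first_row[OF brackets(1,2)] by simp_all
  have "p1 \<noteq> 0"
  proof
    assume "p1 = 0"
    then have "r (var3 0) = r 0"
      using P p23 alg_hom3_zero[OF alg] by (simp add: linform_def)
    then show False
      using \<open>bij r\<close> var3_neq_0 by (metis bij_is_inj inj_eq)
  qed
  then have shape: "q1 = 0 \<and> q3 = 0 \<and> u2 = 0 \<and> u1 = u3 - p1 \<and> q2 * u3 = p1 * p1"
    using linear_poisson_triangular brackets[unfolded p23] by blast
  then have "[:-p1, 1:] * [:-q2, 1:] * [:-u3, 1:] = [:-1, 1:] ^ 2 * [:-\<xi>, 1:]"
    using char_poly_lin_mat_triangular[of r p1 q1 q2 u1 u2 u3] P Q U p23 cp by simp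
  then have "p1 = -1 \<and> q2 = 1 \<and> u3 = 1"
    using reflection_eigenvalues shape \<open>\<xi> \<noteq> 1\<close> by blast
  then have "r (var3 0) = - var3 0" "r (var3 1) = var3 1" "r (var3 2) = 2 * var3 0 + var3 2"
    using P Q U p23 shape by (simp_all add: linform_eq_vars const3_uminus const3_numeral)
  then show ?thesis
    by (rule alg_hom3_eq_subst_refl3[OF alg])
qed

section \<open>Groups generated by Poisson reflections\<close>

lemma gen_group_bij:
  assumes "\<And>r. r \<in> R \<Longrightarrow> bij r"
  shows "g \<in> gen_group R \<Longrightarrow> bij g"
  by (induction rule: gen_group.induct) (blast intro: assms bij_comp bij_imp_bij_inv bij_id)+

lemma gen_group_fixed_point:
  assumes "\<And>r. r \<in> R \<Longrightarrow> bij r \<and> r y = y" and "g \<in> gen_group R"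
  shows "g y = y"
  using assms(2)
proof (induction rule: gen_group.induct)
  case (gen_inv f)
  then have "bij f"
    using gen_group_bij assms(1) by blast
  then show ?case
    using gen_inv.IH by (metis bij_is_inj inv_into_f_f UNIV_I)
qed (simp_all add: assms(1))

lemma gen_group_empty: "gen_group {} = {id}"
proof -
  have "g = id" if "g \<in> gen_group {}" for g :: "'a \<Rightarrow> 'a"
    using gen_group_fixed_point[OF _ that] by auto
  then show ?thesis
    using gen_group.gen_id by blast
qed

lemma invariants_reflection_group:
  fixes R :: "('k::field_char_0 mpoly3 \<Rightarrow> 'k mpoly3) set"
  assumes R: "R \<subseteq> {f. poisson_reflection f}" and "R \<noteq> {}"
  shows "invariants (gen_group R) = {y. subst refl3 y = y}"
proof
  obtain r where "r \<in> R"
    using \<open>R \<noteq> {}\<close> by blast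
  then have "r \<in> gen_group R" and "r = subst refl3"
    using R gen_group.gen_gen poisson_reflection_eq_subst_refl3 by blast+
  then show "invariants (gen_group R) \<subseteq> {y. subst refl3 y = y}"
    unfolding invariants_def by blast
  have "bij r" if "r \<in> R" for r
    using that R by (auto simp: poisson_reflection_def PAut_gr_def)
  then show "{y. subst refl3 y = y} \<subseteq> invariants (gen_group R)"
    unfolding invariants_def
    using gen_group_fixed_point[of R] poisson_reflection_eq_subst_refl3 R by blast
qed

section \<open>The obstruction\<close>

lemma jac3_var3_1_var3_0_squared: "jac3 (var3 1) (var3 0 * var3 0) c = - (2 * (var3 0 * pd 2 c))"
  by (simp add: jac3_def pd_add pd_mult pd_var algebra_simps)

lemma jac3_var3_1_var3_0_plus_var3_2: "jac3 (var3 1) (var3 0 + var3 2) c = pd 0 c - pd 2 c"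
  by (simp add: jac3_def pd_add pd_var)

lemma jac3_refl3_invariants:
  "jac3 (var3 0 * var3 0) (var3 1) (var3 0 + var3 2) = (2 * var3 0 :: 'k::comm_ring_1 mpoly3)"
  by (simp add: jac3_def pd_add pd_mult pd_var algebra_simps)

lemma jac_det_refl3: "jac_det refl3 = -1"
  by (simp add: jac_det_def refl3_def jac3_def pd_add pd_mult pd_var pd_uminus algebra_simps)

lemma const_term_refl3: "const_term (refl3 i) = 0"
  by (simp add: refl3_def const_term_uminus const_term_add const_term_mult)

lemma subst_refl3_invariants:
  "subst refl3 (var3 0 * var3 0) = var3 0 * var3 0"
  "subst refl3 (var3 1) = var3 1"
  "subst refl3 (var3 0 + var3 2) = var3 0 + var3 2"
  by (simp_all add: subst_mult subst_add refl3_def)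

lemma two_var3_0: "2 * var3 0 = (Poly_Mapping.single (1,0,0) 2 :: 'k::comm_ring_1 mpoly3)"
  by (simp add: var3_single numeral_mult_single)

lemma gradient_image_Omega:
  fixes \<psi> :: "'k::field_char_0 mpoly3 \<Rightarrow> 'k mpoly3"
  assumes hom: "poisson_hom \<psi>"
    and Y: "var3 1 \<in> range \<psi>" "var3 0 * var3 0 \<in> range \<psi>" "var3 0 + var3 2 \<in> range \<psi>"
  defines "J \<equiv> jac_det (\<lambda>i. \<psi> (var3 i))"
  shows "pd 0 (\<psi> Omega) = J * pd 0 Omega" and "pd 2 (\<psi> Omega) = J * pd 2 Omega"
proof -
  have alg: "alg_hom3 \<psi>" and bracket: "\<And>p q. \<psi> (jac3 p q Omega) = jac3 (\<psi> p) (\<psi> q) Omega"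
    using hom unfolding poisson_hom_def pbr_eq_jac3 by blast+
  have scale: "jac3 a b (\<psi> Omega) = J * jac3 a b Omega" if "a \<in> range \<psi>" "b \<in> range \<psi>" for a b
  proof -
    from that obtain p q where a: "a = \<psi> p" and b: "b = \<psi> q" by blast
    have "jac3 (\<psi> p) (\<psi> q) (\<psi> Omega) = J * \<psi> (jac3 p q Omega)"
      unfolding J_def by (rule alg_hom3_jac3[OF alg])
    then show ?thesis
      unfolding a b bracket .
  qed
  have "- (2 * (var3 0 * pd 2 (\<psi> Omega))) = J * - (2 * (var3 0 * pd 2 Omega))"
    using scale[OF Y(1,2)] by (simp only: jac3_var3_1_var3_0_squared)
  then have "(2 * var3 0) * (pd 2 (\<psi> Omega) - J * pd 2 Omega) = 0"
    by (simp add: algebra_simps)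
  then have "Poly_Mapping.single (1,0,0) 2 * (pd 2 (\<psi> Omega) - J * pd 2 Omega) = 0"
    unfolding two_var3_0 .
  then show pd2: "pd 2 (\<psi> Omega) = J * pd 2 Omega"
    using single_mult_eq_0_imp[of "2::'k"] by fastforce
  have "pd 0 (\<psi> Omega) - pd 2 (\<psi> Omega) = J * (pd 0 Omega - pd 2 Omega)"
    using scale[OF Y(1,3)] by (simp only: jac3_var3_1_var3_0_plus_var3_2)
  then show "pd 0 (\<psi> Omega) = J * pd 0 Omega"
    using pd2 by (simp add: algebra_simps)
qed

lemma gradient_factor_Omega_linear_part:
  fixes J W :: "'k::field_char_0 mpoly3"
  assumes W0: "pd 0 W = J * pd 0 Omega" and W2: "pd 2 W = J * pd 2 Omega"
  shows "const_term (pd 0 J) = 0" and "const_term (pd 2 J) = 0"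
proof -
  have "pd 2 (pd 0 W) = pd 0 (pd 2 W)"
    by (rule pd_commute)
  then have "pd 2 J * pd 0 Omega + J * pd 0 (pd 2 Omega) = pd 0 J * pd 2 Omega + J * pd 0 (pd 2 Omega)"
    unfolding W0 W2 pd_mult pd_commute[of 2 0 Omega] .
  then have curl: "pd 2 J * pd 0 Omega = pd 0 J * pd 2 Omega"
    by simp
  note simps = pd_Omega pd_mult pd_add pd_var const_term_mult const_term_add
  have "const_term (pd 0 (pd 0 (pd 2 J * pd 0 Omega))) = const_term (pd 0 (pd 0 (pd 0 J * pd 2 Omega)))"
    unfolding curl ..
  then show J2: "const_term (pd 2 J) = 0"
    by (simp add: simps)
  have "const_term (pd 0 (pd 1 (pd 2 J * pd 0 Omega))) = const_term (pd 0 (pd 1 (pd 0 J * pd 2 Omega)))"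
    unfolding curl ..
  then show "const_term (pd 0 J) = 0"
    using J2 by (simp add: simps)
qed

lemma const_term_jac_det_eq_0:
  fixes g h :: "nat \<Rightarrow> 'k::field_char_0 mpoly3"
  assumes fixed: "\<And>i. subst h (g i) = g i" and "jac_det h = -1" and "\<And>i. const_term (h i) = 0"
  shows "const_term (jac_det g) = 0"
proof -
  have "jac_det g = jac3 (subst h (g 0)) (subst h (g 1)) (subst h (g 2))"
    by (simp only: fixed jac_det_def)
  also have "\<dots> = - subst h (jac_det g)"
    unfolding jac3_subst assms(2) by (simp add: jac_det_def)
  finally have "const_term (jac_det g) = - const_term (jac_det g)"
    using const_term_subst[of h, OF assms(3)] const_term_uminus by metis
  then show ?thesis
    by simp
qed

lemma no_poisson_hom_onto_refl3_invariants:
  fixes \<psi> :: "'k::field_char_0 mpoly3 \<Rightarrow> 'k mpoly3"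
  assumes hom: "poisson_hom \<psi>" and img: "range \<psi> = {y. subst refl3 y = y}"
  shows False
proof -
  have Y: "var3 1 \<in> range \<psi>" "var3 0 * var3 0 \<in> range \<psi>" "var3 0 + var3 2 \<in> range \<psi>"
    unfolding img using subst_refl3_invariants by simp_all
  have fixed: "subst refl3 (\<psi> p) = \<psi> p" for p
    using img by blast
  define J where "J = jac_det (\<lambda>i. \<psi> (var3 i))"
  have linear: "const_term (pd 0 J) = 0"
    using gradient_factor_Omega_linear_part(1)[OF gradient_image_Omega[OF hom Y]] unfolding J_def .
  have const: "const_term J = 0"
    unfolding J_def by (rule const_term_jac_det_eq_0[OF fixed jac_det_refl3 const_term_refl3])
  obtain k0 k1 k2 where k: "var3 0 * var3 0 = \<psi> k0" "var3 1 = \<psi> k1" "var3 0 + var3 2 = \<psi> k2"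
    using Y by (metis rangeE)
  have "alg_hom3 \<psi>"
    using hom by (simp add: poisson_hom_def)
  from alg_hom3_jac3[OF this, of k0 k1 k2]
  have "2 * var3 0 = J * \<psi> (jac3 k0 k1 k2)"
    unfolding k[symmetric] jac3_refl3_invariants J_def .
  then have "const_term (pd 0 (2 * var3 0)) =
      const_term (pd 0 J) * const_term (\<psi> (jac3 k0 k1 k2)) + const_term J * const_term (pd 0 (\<psi> (jac3 k0 k1 k2)))"
    by (simp add: pd_mult const_term_mult const_term_add)
  then show False
    using linear const by (simp add: pd_mult pd_var)
qed

theorem lemma3p8p2:
  fixes G :: "('k::field_char_0 mpoly3 \<Rightarrow> 'k mpoly3) set"
  assumes alg_closed: "\<And>p :: 'k poly. degree p \<ge> 1 \<Longrightarrow> \<exists>x. poly p x = 0"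
    and G_sub: "G \<subseteq> PAut_gr"
    and G_fin: "finite G"
    and G_gen: "\<exists>R. R \<subseteq> {f. poisson_reflection f} \<and> G = gen_group R"
    and G_nontriv: "G \<noteq> {id}"
  shows "\<not> (\<exists>\<psi>. poisson_iso_onto \<psi> (invariants G))"
proof
  assume "\<exists>\<psi>. poisson_iso_onto \<psi> (invariants G)"
  then obtain \<psi> where hom: "poisson_hom \<psi>" and img: "range \<psi> = invariants G"
    unfolding poisson_iso_onto_def bij_betw_def by blast
  obtain R where R: "R \<subseteq> {f. poisson_reflection f}" and G: "G = gen_group R"
    using G_gen by blast
  have "R \<noteq> {}"
    using G_nontriv unfolding G by (auto simp: gen_group_empty)
  then have "range \<psi> = {y. subst refl3 y = y}"
    using img invariants_reflection_group[OF R] unfolding G by simp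
  then show False
    using no_poisson_hom_onto_refl3_invariants[OF hom] by blast
qed

end
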